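(* Let $V$ be a finite vocabulary. Each word $x\in V$ has a synonym set $S_x\subseteq V$ with $x\in S_x$, the synonym relation being symmetric, and a nonempty perturbation set $P_x\subseteq V$; assume $|P_x|=|P_{x'}|$ for every word $x$ and every $x'\in S_x$. Write $n_x=|P_x|$ and $n_{x,x'}=|P_x\cap P_{x'}|$. Fix $L\ge1$ and $0\le R\le L$. For $X=x_1,\ldots,x_L\in V^L$ let $S_X=\{X'\in V^L: \sum_i\mathbb{I}\{x'_i\ne x_i\}\le R,\ x'_i\in S_{x_i}\ \forall i\}$ and $\Pi_X(Z)=\prod_{i=1}^L\mathbb{I}\{z_i\in P_{x_i}\}/|P_{x_i}|$. For each word $x$ let $\tilde x^*\in\arg\min_{x'\in S_x}n_{x,x'}/n_x$. Given $X=x_1,\ldots,x_L$, order its positions as $\ell_1,\ldots,\ell_L$ so that $n_{x_{\ell_i},\tilde x^*_{\ell_i}}/n_{x_{\ell_i}}\le n_{x_{\ell_j},\tilde x^*_{\ell_j}}/n_{x_{\ell_j}}$ whenever $i\le j$ (here $\tilde x^*_k$ denotes $\widetilde{(x_k)}^*$), and define $X^*=x^*_1,\ldots,x^*_L$ by $x^*_i=\tilde x^*_i$ if $i\in\{\ell_1,\ldots,\ell_R\}$ and $x^*_i=x_i$ otherwise. Then for every $\lambda\ge0$, $$\max_{X'\in S_X}\sum_{Z\in V^L}\big(\lambda\Pi_X(Z)-\Pi_{X'}(Z)\big)_+=\sum_{Z\in V^L}\big(\lambda\Pi_X(Z)-\Pi_{X^*}(Z)\big)_+,$$ where $(s)_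+=\max(s,0)$.
   Context: $X^*\in S_X$ since it differs from $X$ in at most $R$ positions, each by a synonym. *)

theory Defs
  imports Complex_Main
begin

text \<open>Sentences of length L over the vocabulary (the finite type 'v) are lists of length L;
positions are 0-based indices i < L.\<close>

definition synonym_set :: "('v \<Rightarrow> 'v set) \<Rightarrow> nat \<Rightarrow> nat \<Rightarrow> 'v list \<Rightarrow> 'v list set" where
  "synonym_set S L R X =
     {X'. length X' = L \<and> card {i. i < L \<and> X' ! i \<noteq> X ! i} \<le> R
          \<and> (\<forall>i<L. X' ! i \<in> S (X ! i))}"

definition Pi_dist :: "('v \<Rightarrow> 'v set) \<Rightarrow> nat \<Rightarrow> 'v list \<Rightarrow> 'v list \<Rightarrow> real" where
  "Pi_dist P L X Z =
     (\<Prod>i<L. (if Z ! i \<in> P (X ! i) then 1 else 0) / real (card (P (X ! i))))"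

definition overlap_ratio :: "('v \<Rightarrow> 'v set) \<Rightarrow> 'v \<Rightarrow> 'v \<Rightarrow> real" where
  "overlap_ratio P x x' = real (card (P x \<inter> P x')) / real (card (P x))"

definition pos_part :: "real \<Rightarrow> real" where
  "pos_part s = max s 0"

end

theory Submission
  imports Defs
begin

text \<open>Synonyms have perturbation sets of equal size, so \<open>\<Pi>\<^sub>X\<^sub>'\<close> coincides with \<open>\<Pi>\<^sub>X\<close>
on their common support and vanishes elsewhere. Summing the positive parts therefore gives
\<open>\<lambda> - min \<lambda> 1 * (\<Prod>i. n(x\<^sub>i, x'\<^sub>i) / n(x\<^sub>i))\<close>, and maximising over \<open>S\<^sub>X\<close> means
minimising a product of factors in \<open>[0, 1]\<close>. Every changed position contributes at least the
minimal ratio of its word and unchanged positions contribute 1; an exchange argument shows that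
among products of at most \<open>R\<close> of the minimal ratios the one over the \<open>R\<close> smallest is least,
and \<open>X\<^sup>*\<close> realises exactly this product.\<close>

lemma sum_lists_length_prod:
  fixes f :: "nat \<Rightarrow> 'v::finite \<Rightarrow> 'a::comm_semiring_1"
  shows "(\<Sum>Z\<in>{Z::'v list. length Z = L}. \<Prod>i<L. f i (Z!i)) = (\<Prod>i<L. \<Sum>v\<in>UNIV. f i v)"
proof (induction L arbitrary: f)
  case 0
  have "{Z::'v list. length Z = 0} = {[]}" by auto
  then show ?case by simp
next
  case (Suc L)
  have cons_image: "{Z::'v list. length Z = Suc L} = (\<lambda>(a,Z). a#Z) ` (UNIV \<times> {Z. length Z = L})"
    by (auto simp: length_Suc_conv)
  have cons_inj: "inj_on (\<lambda>(a,Z). a#Z) (UNIV \<times> {Z::'v list. length Z = L})"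
    by (auto simp: inj_on_def)
  have "(\<Sum>Z\<in>{Z::'v list. length Z = Suc L}. \<Prod>i<Suc L. f i (Z!i))
      = (\<Sum>(a,Z)\<in>UNIV \<times> {Z::'v list. length Z = L}. \<Prod>i<Suc L. f i ((a#Z)!i))"
    unfolding cons_image by (subst sum.reindex[OF cons_inj]) (simp add: case_prod_unfold)
  also have "\<dots> = (\<Sum>a\<in>UNIV. \<Sum>Z\<in>{Z::'v list. length Z = L}. f 0 a * (\<Prod>i<L. f (Suc i) (Z!i)))"
    by (simp only: sum.cartesian_product prod.lessThan_Suc_shift nth_Cons_0 nth_Cons_Suc)
  also have "\<dots> = (\<Sum>a\<in>UNIV. f 0 a * (\<Prod>i<L. \<Sum>v\<in>UNIV. f (Suc i) v))"
    by (simp add: sum_distrib_left[symmetric] Suc.IH[of "\<lambda>i. f (Suc i)"])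
  also have "\<dots> = (\<Prod>i<Suc L. \<Sum>v\<in>UNIV. f i v)"
    by (simp only: prod.lessThan_Suc_shift sum_distrib_right)
  finally show ?case .
qed

lemma prod_indicator_divide:
  "(\<Prod>i<L. (if Z!i \<in> A i then 1 else 0) / (c i :: 'a::field))
     = (if \<forall>i<L. Z!i \<in> A i then \<Prod>i<L. 1 / c i else 0)"
  by (auto intro: prod.cong)

lemma sum_lists_prod_indicator_divide:
  "(\<Sum>Z\<in>{Z::'v::finite list. length Z = L}. \<Prod>i<L. (if Z!i \<in> A i then 1 else 0) / (c i :: 'a::field))
     = (\<Prod>i<L. of_nat (card (A i)) / c i)"
proof -
  have "(\<Sum>v\<in>UNIV. (if v \<in> A i then 1 else 0) / c i) = of_nat (card (A i)) / c i" for i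
    by (simp add: sum_divide_distrib[symmetric] sum.If_cases)
  then show ?thesis
    by (simp add: sum_lists_length_prod[of "\<lambda>i v. (if v \<in> A i then 1 else 0) / c i"])
qed

lemma Pi_dist_eq_if:
  "Pi_dist P L X Z = (if \<forall>i<L. Z!i \<in> P (X!i) then \<Prod>i<L. 1 / real (card (P (X!i))) else 0)"
  unfolding Pi_dist_def by (rule prod_indicator_divide)

lemma sum_Pi_dist:
  fixes P :: "'v::finite \<Rightarrow> 'v set"
  assumes "\<And>x. P x \<noteq> {}"
  shows "(\<Sum>Z\<in>{Z. length Z = L}. Pi_dist P L X Z) = 1"
  unfolding Pi_dist_def sum_lists_prod_indicator_divide using assms by simp

lemma pos_part_Pi_dist_diff:
  fixes P :: "'v::finite \<Rightarrow> 'v set"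
  assumes P_ne: "\<And>x. P x \<noteq> {}"
    and card_eq: "\<And>i. i < L \<Longrightarrow> card (P (Y!i)) = card (P (X!i))"
    and "lam \<ge> 0"
  shows "pos_part (lam * Pi_dist P L X Z - Pi_dist P L Y Z)
    = lam * Pi_dist P L X Z
      - min lam 1 * (\<Prod>i<L. (if Z!i \<in> P (X!i) \<inter> P (Y!i) then 1 else 0) / real (card (P (X!i))))"
proof -
  define c where "c = (\<Prod>i<L. 1 / real (card (P (X!i))))"
  have "c > 0" unfolding c_def using P_ne by (intro prod_pos) (simp add: card_gt_0_iff)
  have PX: "Pi_dist P L X Z = (if \<forall>i<L. Z!i \<in> P (X!i) then c else 0)"
    unfolding Pi_dist_eq_if c_def ..
  have PY: "Pi_dist P L Y Z = (if \<forall>i<L. Z!i \<in> P (Y!i) then c else 0)"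
    unfolding Pi_dist_eq_if c_def using card_eq by (auto intro: prod.cong)
  have overlap: "(\<Prod>i<L. (if Z!i \<in> P (X!i) \<inter> P (Y!i) then 1 else 0) / real (card (P (X!i))))
      = (if (\<forall>i<L. Z!i \<in> P (X!i)) \<and> (\<forall>i<L. Z!i \<in> P (Y!i)) then c else 0)"
    unfolding prod_indicator_divide c_def by auto
  show ?thesis
    unfolding PX PY overlap pos_part_def using \<open>c > 0\<close> \<open>lam \<ge> 0\<close>
    by (cases "lam \<le> 1") (auto simp: min_def max_def mult_le_cancel_right1 mult_le_0_iff)
qed

lemma sum_pos_part_Pi_dist_diff:
  fixes P :: "'v::finite \<Rightarrow> 'v set"
  assumes P_ne: "\<And>x. P x \<noteq> {}"
    and card_eq: "\<And>i. i < L \<Longrightarrow> card (P (Y!i)) = card (P (X!i))"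
    and "lam \<ge> 0"
  shows "(\<Sum>Z\<in>{Z. length Z = L}. pos_part (lam * Pi_dist P L X Z - Pi_dist P L Y Z))
     = lam - min lam 1 * (\<Prod>i<L. overlap_ratio P (X!i) (Y!i))"
proof -
  have "(\<Sum>Z\<in>{Z. length Z = L}. pos_part (lam * Pi_dist P L X Z - Pi_dist P L Y Z))
      = lam * (\<Sum>Z\<in>{Z. length Z = L}. Pi_dist P L X Z) - min lam 1 *
          (\<Sum>Z\<in>{Z. length Z = L}. \<Prod>i<L. (if Z!i \<in> P (X!i) \<inter> P (Y!i) then 1 else 0) / real (card (P (X!i))))"
    by (simp add: pos_part_Pi_dist_diff[OF assms] sum_subtractf sum_distrib_left)
  then show ?thesis
    unfolding sum_Pi_dist[OF P_ne] sum_lists_prod_indicator_divide overlap_ratio_def by simp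
qed

lemma prod_le_prod_if_dominated:
  fixes m :: "'a \<Rightarrow> real"
  assumes "finite U" "E \<subseteq> U" "D \<subseteq> U" "card D \<le> card E"
    and dominated: "\<And>i j. i \<in> E \<Longrightarrow> j \<in> U - E \<Longrightarrow> m i \<le> m j"
    and nonneg: "\<And>i. i \<in> U \<Longrightarrow> 0 \<le> m i"
    and le_1: "\<And>i. i \<in> E \<Longrightarrow> m i \<le> 1"
  shows "prod m E \<le> prod m D"
proof -
  have fin: "finite D" "finite E" using assms finite_subset by blast+
  have "card (D - E) \<le> card (E - D)"
    using \<open>card D \<le> card E\<close> card_Int_Diff[OF fin(1), of E] card_Int_Diff[OF fin(2), of D]
    by (simp add: Int_commute)
  then obtain E' where E': "E' \<subseteq> E - D" "card E' = card (D - E)"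
    by (rule obtain_subset_with_card_n)
  have "finite E'" using finite_subset[OF E'(1)] fin by simp
  \<comment> \<open>pair each element of \<open>D - E\<close> with an element of \<open>E - D\<close> carrying a smaller factor\<close>
  then obtain h where h: "bij_betw h (D - E) E'"
    using finite_same_card_bij[of "D - E" E'] E'(2) fin by auto
  have "prod m (E - D) = prod m E' * prod m (E - D - E')"
    using E'(1) fin by (simp add: prod.subset_diff)
  also have "\<dots> \<le> prod m E'"
    using E'(1) fin assms by (intro mult_left_le prod_le_1 prod_nonneg) auto
  also have "\<dots> = (\<Prod>j\<in>D - E. m (h j))"
    using prod.reindex_bij_betw[OF h, of m] by simp
  also have "\<dots> \<le> prod m (D - E)"
  proof (intro prod_mono conjI)
    fix j assume j: "j \<in> D - E"
    then have "h j \<in> E" using h E'(1) by (auto dest: bij_betwE)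
    then show "0 \<le> m (h j)" "m (h j) \<le> m j"
      using j assms by (auto intro!: nonneg dominated)
  qed
  finally have "prod m (E - D) \<le> prod m (D - E)" .
  then have "prod m (E \<inter> D) * prod m (E - D) \<le> prod m (E \<inter> D) * prod m (D - E)"
    using assms by (intro mult_left_mono prod_nonneg) auto
  then show ?thesis
    using fin by (simp add: prod.Int_Diff[of E _ D] prod.Int_Diff[of D _ E] Int_commute)
qed

lemma bij_betw_prefix_image:
  assumes "bij_betw ell {..<L} {..<L}" "R \<le> L"
  shows "ell ` {..<R} \<subseteq> {..<L}" "card (ell ` {..<R}) = R"
proof -
  have "{..<R} \<subseteq> {..<L}" using \<open>R \<le> L\<close> by auto
  then show "ell ` {..<R} \<subseteq> {..<L}" "card (ell ` {..<R}) = R"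
    using assms(1) by (auto simp: bij_betw_def card_image inj_on_subset)
qed

lemma prod_sorted_prefix_le:
  fixes m :: "nat \<Rightarrow> real"
  assumes ell: "bij_betw ell {..<L} {..<L}"
    and sorted: "\<And>i j. i \<le> j \<Longrightarrow> j < L \<Longrightarrow> m (ell i) \<le> m (ell j)"
    and "R \<le> L" "D \<subseteq> {..<L}" "card D \<le> R"
    and "\<And>i. i < L \<Longrightarrow> 0 \<le> m i" "\<And>i. i < L \<Longrightarrow> m i \<le> 1"
  shows "prod m (ell ` {..<R}) \<le> prod m D"
proof (rule prod_le_prod_if_dominated[where U = "{..<L}"])
  show "m i \<le> m j" if i_in: "i \<in> ell ` {..<R}" and j_out: "j \<in> {..<L} - ell ` {..<R}" for i j
  proof -
    obtain a where "a < R" "i = ell a" using i_in by auto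
    moreover obtain b where "b < L" "j = ell b"
      using j_out ell by (auto simp: bij_betw_def)
    moreover have "R \<le> b" using j_out \<open>j = ell b\<close> by (metis DiffD2 imageI lessThan_iff not_le)
    ultimately show ?thesis using sorted by simp
  qed
qed (use assms bij_betw_prefix_image[OF ell \<open>R \<le> L\<close>] in auto)

lemma overlap_ratio_nonneg: "0 \<le> overlap_ratio P x y"
  unfolding overlap_ratio_def by simp

lemma overlap_ratio_le_1: "overlap_ratio P x y \<le> 1"
proof (cases "finite (P x)")
  case True
  then have "card (P x \<inter> P y) \<le> card (P x)" by (simp add: card_mono)
  then show ?thesis unfolding overlap_ratio_def by (auto simp: divide_le_eq_1)
qed (simp add: overlap_ratio_def)

lemma overlap_ratio_self:
  "finite (P x) \<Longrightarrow> P x \<noteq> {} \<Longrightarrow> overlap_ratio P x x = 1"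
  unfolding overlap_ratio_def by simp

lemma finite_synonym_set: "finite (synonym_set S L R (X :: 'v::finite list))"
proof (rule finite_subset)
  show "synonym_set S L R X \<subseteq> {Z. length Z = L}" by (auto simp: synonym_set_def)
  show "finite {Z :: 'v list. length Z = L}"
    using finite_lists_length_eq[of "UNIV :: 'v set" L] by simp
qed

lemma card_P_synonym_set:
  assumes "\<And>x x'. x' \<in> S x \<Longrightarrow> card (P x) = card (P x')"
    and "Y \<in> synonym_set S L R X" "i < L"
  shows "card (P (Y!i)) = card (P (X!i))"
  using assms(1)[of "Y!i" "X!i"] assms(2,3) by (simp add: synonym_set_def)

lemma substitute_mem_synonym_set:
  assumes "E \<subseteq> {..<L}" "card E \<le> R" "length X = L"
    and "\<And>x. x \<in> S x" "\<And>x. tx x \<in> S x"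
  shows "map (\<lambda>i. if i \<in> E then tx (X!i) else X!i) [0..<L] \<in> synonym_set S L R X"
proof -
  let ?Y = "map (\<lambda>i. if i \<in> E then tx (X!i) else X!i) [0..<L]"
  have "?Y!i = (if i \<in> E then tx (X!i) else X!i)" if "i < L" for i
    using that by simp
  then have "{i. i < L \<and> ?Y!i \<noteq> X!i} \<subseteq> E"
    by (auto split: if_splits)
  then have "card {i. i < L \<and> ?Y!i \<noteq> X!i} \<le> card E"
    using finite_subset[OF assms(1)] by (intro card_mono) auto
  with \<open>card E \<le> R\<close> have "card {i. i < L \<and> ?Y!i \<noteq> X!i} \<le> R" by simp
  then show ?thesis using assms(4,5) by (simp add: synonym_set_def)
qed

lemma prod_overlap_ratio_substitute:
  fixes P :: "'v::finite \<Rightarrow> 'v set"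
  assumes "\<And>x. P x \<noteq> {}" "E \<subseteq> {..<L}"
  shows "(\<Prod>i<L. overlap_ratio P (X!i) (map (\<lambda>i. if i \<in> E then tx (X!i) else X!i) [0..<L] ! i))
    = (\<Prod>i\<in>E. overlap_ratio P (X!i) (tx (X!i)))"
proof -
  have "(\<Prod>i<L. overlap_ratio P (X!i) (map (\<lambda>i. if i \<in> E then tx (X!i) else X!i) [0..<L] ! i))
      = (\<Prod>i<L. if i \<in> E then overlap_ratio P (X!i) (tx (X!i)) else 1)"
    using assms(1) by (intro prod.cong) (auto simp: overlap_ratio_self)
  also have "\<dots> = (\<Prod>i\<in>E. overlap_ratio P (X!i) (tx (X!i)))"
    using assms(2) by (simp add: prod.If_cases Int_absorb1)
  finally show ?thesis .
qed

lemma prod_overlap_ratio_changed_le: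
  fixes P :: "'v::finite \<Rightarrow> 'v set"
  assumes "\<And>x. P x \<noteq> {}"
    and tx_min: "\<And>x x'. x' \<in> S x \<Longrightarrow> overlap_ratio P x (tx x) \<le> overlap_ratio P x x'"
    and "Y \<in> synonym_set S L R X"
  shows "(\<Prod>i\<in>{i. i < L \<and> Y!i \<noteq> X!i}. overlap_ratio P (X!i) (tx (X!i)))
    \<le> (\<Prod>i<L. overlap_ratio P (X!i) (Y!i))"
proof -
  have "(\<Prod>i\<in>{i. i < L \<and> Y!i \<noteq> X!i}. overlap_ratio P (X!i) (tx (X!i)))
      = (\<Prod>i<L. if Y!i \<noteq> X!i then overlap_ratio P (X!i) (tx (X!i)) else 1)"
    by (simp add: prod.If_cases Collect_conj_eq lessThan_def Int_commute)
  also have "\<dots> \<le> (\<Prod>i<L. overlap_ratio P (X!i) (Y!i))"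
    using assms by (intro prod_mono) (auto simp: synonym_set_def overlap_ratio_nonneg overlap_ratio_self)
  finally show ?thesis .
qed

theorem lemma3:
  fixes S P :: "'v::finite \<Rightarrow> 'v set"
    and L R :: nat
    and X :: "'v list"
    and tx :: "'v \<Rightarrow> 'v"
    and ell :: "nat \<Rightarrow> nat"
    and lam :: real
  assumes S_refl: "\<And>x. x \<in> S x"
    and S_sym: "\<And>x x'. x' \<in> S x \<Longrightarrow> x \<in> S x'"
    and P_ne: "\<And>x. P x \<noteq> {}"
    and P_card: "\<And>x x'. x' \<in> S x \<Longrightarrow> card (P x) = card (P x')"
    and L_pos: "L \<ge> 1"
    and R_le: "R \<le> L"
    and X_len: "length X = L"
    and tx_mem: "\<And>x. tx x \<in> S x"
    and tx_min: "\<And>x x'. x' \<in> S x \<Longrightarrow> overlap_ratio P x (tx x) \<le> overlap_ratio P x x'"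
    and ell_bij: "bij_betw ell {..<L} {..<L}"
    and ell_sorted: "\<And>i j. i \<le> j \<Longrightarrow> j < L \<Longrightarrow>
        overlap_ratio P (X ! ell i) (tx (X ! ell i)) \<le> overlap_ratio P (X ! ell j) (tx (X ! ell j))"
    and lam_nonneg: "lam \<ge> 0"
  shows "Max ((\<lambda>X'. \<Sum>Z\<in>{Z. length Z = L}. pos_part (lam * Pi_dist P L X Z - Pi_dist P L X' Z))
               ` synonym_set S L R X)
       = (\<Sum>Z\<in>{Z. length Z = L}. pos_part (lam * Pi_dist P L X Z
             - Pi_dist P L (map (\<lambda>i. if i \<in> ell ` {..<R} then tx (X ! i) else X ! i) [0..<L]) Z))"
proof -
  define m where "m i = overlap_ratio P (X!i) (tx (X!i))" for i
  define Xstar where "Xstar = map (\<lambda>i. if i \<in> ell ` {..<R} then tx (X ! i) else X ! i) [0..<L]"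
  define gain where
    "gain Y = (\<Sum>Z\<in>{Z. length Z = L}. pos_part (lam * Pi_dist P L X Z - Pi_dist P L Y Z))" for Y
  note prefix = bij_betw_prefix_image[OF ell_bij R_le]
  have gain_eq: "gain Y = lam - min lam 1 * (\<Prod>i<L. overlap_ratio P (X!i) (Y!i))"
    if "Y \<in> synonym_set S L R X" for Y
    unfolding gain_def using P_ne card_P_synonym_set[OF P_card that] lam_nonneg
    by (rule sum_pos_part_Pi_dist_diff)
  have Xstar_mem: "Xstar \<in> synonym_set S L R X"
    unfolding Xstar_def using prefix X_len S_refl tx_mem by (intro substitute_mem_synonym_set) auto
  have "gain Y \<le> gain Xstar" if Y: "Y \<in> synonym_set S L R X" for Y
  proof -
    have "(\<Prod>i<L. overlap_ratio P (X!i) (Xstar!i)) = prod m (ell ` {..<R})"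
      unfolding Xstar_def m_def using P_ne prefix(1) by (rule prod_overlap_ratio_substitute)
    also have "\<dots> \<le> prod m {i. i < L \<and> Y!i \<noteq> X!i}"
      by (rule prod_sorted_prefix_le[where m = m, OF ell_bij ell_sorted[folded m_def] R_le])
        (use Y in \<open>auto simp: synonym_set_def m_def overlap_ratio_nonneg overlap_ratio_le_1\<close>)
    also have "\<dots> \<le> (\<Prod>i<L. overlap_ratio P (X!i) (Y!i))"
      unfolding m_def using P_ne tx_min Y by (rule prod_overlap_ratio_changed_le)
    finally have "min lam 1 * (\<Prod>i<L. overlap_ratio P (X!i) (Xstar!i))
        \<le> min lam 1 * (\<Prod>i<L. overlap_ratio P (X!i) (Y!i))"
      using lam_nonneg by (intro mult_left_mono) auto
    then show ?thesis unfolding gain_eq[OF Y] gain_eq[OF Xstar_mem] by simp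
  qed
  then have "Max (gain ` synonym_set S L R X) = gain Xstar"
    using finite_synonym_set[of S L R X] Xstar_mem by (intro Max_eqI) auto
  then show ?thesis unfolding gain_def Xstar_def .
qed

end
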